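(* Let $m\ge2$, $C=C_{2m}(1,1)=J_{2m}+E_{m-1,m+1}-E_{m,m+2}$, and let $v_0,v_{\pi/4},v_{\pi/2}$ be the eigenvectors defined below, with normalizations $\widehat v_\theta=v_\theta/\|v_\theta\|$. Then $$\bigl|\langle\widehat v_0,\widehat v_{\pi/4}\rangle\bigr|>\bigl|\langle\widehat v_{\pi/4},\widehat v_{\pi/2}\rangle\bigr|.$$ In particular, $C_{2m}(1,1)$ is not rotationally invariant.
   Context: $J_n$ is the $n\times n$ nilpotent Jordan block; $E_{a,b}$ is the matrix unit. $X$ is rotationally invariant if $X$ and $e^{i\theta}X$ are unitarily similar for every real $\theta$. $U_k$ are Chebyshev polynomials of the second kind ($U_{-1}=0$, $U_0=1$, $U_{k+1}(u)=2uU_k(u)-U_{k-1}(u)$). Let $\lambda_m$ be the largest root of $P_m(x)=U_m(x)-U_{m-1}(x)-U_{m-2}(x)$ and write $U_r=U_r(\lambda_m)$; $\lambda_m$ is the largest eigenvalue of $\operatorname{Re}C$, $\operatorname{Re}(e^{i\pi/4}C)$ and $\operatorname{Re}(iC)$, with respective eigenvectors: $v_0(k)=U_{k-1}$ ($1\le k\le m-1$), $\frac12U_{m-1}$ ($k=m,m+1$), $0$ ($m+2\le k\le 2m$); with $\eta=e^{-i\pi/4}$, $\alpha=\frac1{1+\eta}$, $q=(\sqrt2-1)e^{-i\pi/4}$: $v_{\pi/4}(k)=\eta^{k-1}U_{k-1}$ ($1\le k\le m-1$), $\eta^{k-1}\alpha U_{m-1}$ ($k=m,m+1$), $\eta^{k-1}qU_{2m-k}$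 ($m+2\le k\le2m$); with $\beta=\frac{1+i}2$: $v_{\pi/2}(k)=(-i)^{k-1}U_{k-1}$ ($1\le k\le m-1$), $(-i)^{k-1}\beta U_{m-1}$ ($k=m,m+1$), $(-i)^{k-1}U_{2m-k}$ ($m+2\le k\le 2m$). $\operatorname{Re}Y=\frac12(Y+Y^* )$. *)

theory Defs
  imports Complex_Main
begin

(* Matrices and vectors of size n are represented as functions with
   1-based indices ranging over {1..n}. *)

fun chebU :: "nat \<Rightarrow> real \<Rightarrow> real" where
  "chebU 0 u = 1"
| "chebU (Suc 0) u = 2 * u"
| "chebU (Suc (Suc r)) u = 2 * u * chebU (Suc r) u - chebU r u"

definition P :: "nat \<Rightarrow> real \<Rightarrow> real" where
  "P m x = chebU m x - chebU (m - 1) x - chebU (m - 2) x"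

definition lam :: "nat \<Rightarrow> real" where
  "lam m = Max {x. P m x = 0}"

definition Uv :: "nat \<Rightarrow> nat \<Rightarrow> complex" where
  "Uv m r = complex_of_real (chebU r (lam m))"

definition Jblock :: "nat \<Rightarrow> nat \<Rightarrow> nat \<Rightarrow> complex" where
  "Jblock n i j = (if 1 \<le> i \<and> i < n \<and> j = i + 1 then 1 else 0)"

definition Emat :: "nat \<Rightarrow> nat \<Rightarrow> nat \<Rightarrow> nat \<Rightarrow> complex" where
  "Emat a b i j = (if i = a \<and> j = b then 1 else 0)"

definition Cmat :: "nat \<Rightarrow> nat \<Rightarrow> nat \<Rightarrow> complex" where
  "Cmat m i j = Jblock (2 * m) i j + Emat (m - 1) (m + 1) i j - Emat m (m + 2) i j"

definition v0 :: "nat \<Rightarrow> nat \<Rightarrow> complex" where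
  "v0 m k = (if 1 \<le> k \<and> k \<le> m - 1 then Uv m (k - 1)
             else if k = m \<or> k = m + 1 then Uv m (m - 1) / 2
             else 0)"

definition eta :: complex where "eta = cis (- pi / 4)"
definition alpha :: complex where "alpha = 1 / (1 + eta)"
definition qc :: complex where "qc = complex_of_real (sqrt 2 - 1) * cis (- pi / 4)"
definition betac :: complex where "betac = (1 + \<i>) / 2"

definition v4 :: "nat \<Rightarrow> nat \<Rightarrow> complex" where
  "v4 m k = (if 1 \<le> k \<and> k \<le> m - 1 then eta ^ (k - 1) * Uv m (k - 1)
             else if k = m \<or> k = m + 1 then eta ^ (k - 1) * alpha * Uv m (m - 1)
             else if m + 2 \<le> k \<and> k \<le> 2 * m then eta ^ (k - 1) * qc * Uv m (2 * m - k)
             else 0)"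

definition v2 :: "nat \<Rightarrow> nat \<Rightarrow> complex" where
  "v2 m k = (if 1 \<le> k \<and> k \<le> m - 1 then (- \<i>) ^ (k - 1) * Uv m (k - 1)
             else if k = m \<or> k = m + 1 then (- \<i>) ^ (k - 1) * betac * Uv m (m - 1)
             else if m + 2 \<le> k \<and> k \<le> 2 * m then (- \<i>) ^ (k - 1) * Uv m (2 * m - k)
             else 0)"

definition cinner :: "nat \<Rightarrow> (nat \<Rightarrow> complex) \<Rightarrow> (nat \<Rightarrow> complex) \<Rightarrow> complex" where
  "cinner n v w = (\<Sum>k=1..n. v k * cnj (w k))"

definition vnorm :: "nat \<Rightarrow> (nat \<Rightarrow> complex) \<Rightarrow> real" where
  "vnorm n v = sqrt (\<Sum>k=1..n. (cmod (v k))\<^sup>2)"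

definition normalize :: "nat \<Rightarrow> (nat \<Rightarrow> complex) \<Rightarrow> nat \<Rightarrow> complex" where
  "normalize n v = (\<lambda>k. v k / complex_of_real (vnorm n v))"

definition mmul :: "nat \<Rightarrow> (nat \<Rightarrow> nat \<Rightarrow> complex) \<Rightarrow> (nat \<Rightarrow> nat \<Rightarrow> complex) \<Rightarrow> nat \<Rightarrow> nat \<Rightarrow> complex" where
  "mmul n A B = (\<lambda>i j. \<Sum>k=1..n. A i k * B k j)"

definition madj :: "(nat \<Rightarrow> nat \<Rightarrow> complex) \<Rightarrow> nat \<Rightarrow> nat \<Rightarrow> complex" where
  "madj A = (\<lambda>i j. cnj (A j i))"

definition unitary_mat :: "nat \<Rightarrow> (nat \<Rightarrow> nat \<Rightarrow> complex) \<Rightarrow> bool" where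
  "unitary_mat n U \<longleftrightarrow>
     (\<forall>i\<in>{1..n}. \<forall>j\<in>{1..n}.
        mmul n U (madj U) i j = (if i = j then 1 else 0) \<and>
        mmul n (madj U) U i j = (if i = j then 1 else 0))"

definition unitarily_similar :: "nat \<Rightarrow> (nat \<Rightarrow> nat \<Rightarrow> complex) \<Rightarrow> (nat \<Rightarrow> nat \<Rightarrow> complex) \<Rightarrow> bool" where
  "unitarily_similar n X Y \<longleftrightarrow>
     (\<exists>U. unitary_mat n U \<and>
        (\<forall>i\<in>{1..n}. \<forall>j\<in>{1..n}. mmul n (mmul n U X) (madj U) i j = Y i j))"

definition rotationally_invariant :: "nat \<Rightarrow> (nat \<Rightarrow> nat \<Rightarrow> complex) \<Rightarrow> bool" where
  "rotationally_invariant n X \<longleftrightarrow>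
     (\<forall>\<theta>::real. unitarily_similar n X (\<lambda>i j. cis \<theta> * X i j))"

end

theory Submission
  imports Defs "HOL-Computational_Algebra.Polynomial"
begin

(* Write m = n + 1, u_j = U_j(lambda_m) and S = cheb_eta_sum n = sum_{j<n} u_j^2 eta^(n-j).
   Up to the unimodular factor eta^n,
     <v_0, v_pi/4> = S + u_n^2/2   and   <v_pi/4, v_pi/2> = S + sqrt 2 u_n^2/2 + (sqrt 2 - 1) conj S,
   while |v_pi/2| = sqrt 2 |v_0|. Expanding the moduli, the inequality becomes
   (6 - 4 sqrt 2) (Im S)^2 < 2 (Im S)^2, i.e. Im S <> 0. As lambda_m >= 1, the u_j increase, and
   -Im S = sum_t u_(n-t)^2 sin (t pi/4) is positive by Abel summation, because the partial sums
   of sin (k pi/4) are nonnegative.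
   Rotational invariance fails because word_trace X = tr ((X^2 adj X)^2) is invariant under
   unitary similarity and changes sign under X -> i X, whereas it equals 2 for C. *)

section \<open>Chebyshev polynomials and the largest root of P\<close>

fun chebU_poly :: "nat \<Rightarrow> real poly" where
  "chebU_poly 0 = 1"
| "chebU_poly (Suc 0) = [:0, 2:]"
| "chebU_poly (Suc (Suc r)) = pCons 0 (smult 2 (chebU_poly (Suc r))) - chebU_poly r"

lemma poly_chebU_poly: "poly (chebU_poly r) x = chebU r x"
  by (induction r rule: chebU_poly.induct) (auto simp: algebra_simps)

lemma chebU_at_1: "chebU r 1 = real r + 1"
  by (induction r rule: induct_nat_012) auto

lemma chebU_ge_1_and_step:
  assumes "1 \<le> x"
  shows "1 \<le> chebU r x \<and> chebU r x + 1 \<le> chebU (Suc r) x"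
proof (induction r)
  case 0
  then show ?case using assms by simp
next
  case (Suc r)
  have "2 * chebU (Suc r) x \<le> 2 * x * chebU (Suc r) x"
    using Suc assms by simp
  moreover have "chebU (Suc (Suc r)) x = 2 * x * chebU (Suc r) x - chebU r x"
    by simp
  ultimately show ?case using Suc by linarith
qed

lemma chebU_ge_1: "1 \<le> x \<Longrightarrow> 1 \<le> chebU r x"
  using chebU_ge_1_and_step by blast

lemma strict_mono_chebU:
  assumes "1 \<le> x"
  shows "strict_mono (\<lambda>r. chebU r x)"
  unfolding strict_mono_Suc_iff
proof
  show "chebU r x < chebU (Suc r) x" for r
    using chebU_ge_1_and_step[OF assms, of r] by linarith
qed

lemma P_at_1_nonpos: "2 \<le> m \<Longrightarrow> P m 1 \<le> 0"
  by (simp add: P_def chebU_at_1 of_nat_diff)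

lemma P_at_2_pos:
  assumes "2 \<le> m"
  shows "0 < P m 2"
proof -
  obtain k where m: "m = Suc (Suc k)"
    using assms by (metis add_2_eq_Suc le_Suc_ex)
  have "chebU k 2 < chebU (Suc k) 2" "1 \<le> chebU k 2"
    using strict_mono_chebU[of 2] chebU_ge_1[of 2] by (simp_all add: strict_mono_Suc_iff)
  then show ?thesis by (simp add: P_def m)
qed

lemma P_eq_poly: "P m = poly (chebU_poly m - chebU_poly (m - 1) - chebU_poly (m - 2))"
  by (simp add: P_def poly_chebU_poly fun_eq_iff)

lemma finite_P_roots:
  assumes "2 \<le> m"
  shows "finite {x. P m x = 0}"
proof -
  have "0 < poly (chebU_poly m - chebU_poly (m - 1) - chebU_poly (m - 2)) 2"
    using P_at_2_pos[OF assms] unfolding P_eq_poly .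
  then have "chebU_poly m - chebU_poly (m - 1) - chebU_poly (m - 2) \<noteq> 0"
    by (metis less_irrefl poly_0)
  then show ?thesis
    unfolding P_eq_poly by (rule poly_roots_finite)
qed

lemma lam_ge_1:
  assumes "2 \<le> m"
  shows "1 \<le> lam m"
proof -
  have "continuous_on {1..2} (P m)"
    unfolding P_eq_poly by (intro continuous_intros)
  then obtain x where "1 \<le> x" "P m x = 0"
    using IVT'[of "P m" 1 0 2] P_at_1_nonpos[OF assms] P_at_2_pos[OF assms] by force
  then show ?thesis
    unfolding lam_def using Max_ge[OF finite_P_roots[OF assms], of x] by simp
qed

section \<open>Abel summation\<close>

lemma sum_by_parts:
  fixes g s :: "nat \<Rightarrow> 'a::comm_ring"
  shows "(\<Sum>t=1..n. g t * s t) =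
    g (Suc n) * (\<Sum>k=1..n. s k) + (\<Sum>t=1..n. (g t - g (Suc t)) * (\<Sum>k=1..t. s k))"
  by (induction n) (simp_all add: algebra_simps)

lemma abel_sum_pos:
  fixes g s :: "nat \<Rightarrow> real"
  assumes "1 \<le> n"
    and partial_sums_nonneg: "\<And>t. 0 \<le> (\<Sum>k=1..t. s k)" and "0 < s 1"
    and antitone: "\<And>t. 1 \<le> t \<Longrightarrow> t \<le> n \<Longrightarrow> g (Suc t) \<le> g t"
    and "g (Suc n) = 0" and "g 2 < g 1"
  shows "0 < (\<Sum>t=1..n. g t * s t)"
proof -
  have "0 < (\<Sum>t=1..n. (g t - g (Suc t)) * (\<Sum>k=1..t. s k))"
  proof (rule sum_pos2)
    show "1 \<in> {1..n}" using assms(1) by simp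
    show "0 < (g 1 - g (Suc 1)) * (\<Sum>k=1..1. s k)"
      using assms by (simp add: numeral_2_eq_2)
    show "0 \<le> (g t - g (Suc t)) * (\<Sum>k=1..t. s k)" if "t \<in> {1..n}" for t
      using that antitone partial_sums_nonneg by simp
  qed simp
  then show ?thesis
    by (simp only: sum_by_parts[of g s n] \<open>g (Suc n) = 0\<close> mult_zero_left add_0)
qed

lemma sum_sin_quarter_pi_nonneg: "0 \<le> (\<Sum>k=1..t. sin (real k * pi / 4))"
proof -
  define S where "S t = (\<Sum>k=1..t. sin (real k * pi / 4))" for t
  have antiperiodic: "S (t + 4) + S t = S 4" for t
  proof (induction t)
    case (Suc t)
    have "real (Suc (t + 4)) * pi / 4 = real (Suc t) * pi / 4 + pi"
      by (simp add: field_simps)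
    then have "sin (real (Suc (t + 4)) * pi / 4) = - sin (real (Suc t) * pi / 4)"
      by (simp only: sin_periodic_pi)
    moreover have "S (Suc (t + 4)) = S (t + 4) + sin (real (Suc (t + 4)) * pi / 4)"
      "S (Suc t) = S t + sin (real (Suc t) * pi / 4)"
      unfolding S_def by (simp_all only: sum.cl_ivl_Suc) simp_all
    ultimately show ?case using Suc by simp
  qed (simp add: S_def)
  have sin_three_quarter_pi: "sin (3 * pi / 4) = sqrt 2 / 2"
    using sin_periodic_pi[of "- pi / 4"] by (simp add: sin_45)
  have initial_values: "S 0 = 0" "S (Suc 0) = sqrt 2 / 2" "S 2 = 1 + sqrt 2 / 2"
    "S 3 = 1 + sqrt 2" "S 4 = 1 + sqrt 2"
    by (simp_all add: S_def eval_nat_numeral sin_45 sin_three_quarter_pi)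
  have "0 \<le> S t \<and> S t \<le> S 4"
  proof (induction t rule: less_induct)
    case (less t)
    show ?case
    proof (cases "t < 4")
      case True
      then consider "t = 0" | "t = 1" | "t = 2" | "t = 3" by linarith
      then show ?thesis
        by cases (simp_all add: initial_values)
    next
      case False
      then have "t = (t - 4) + 4" "t - 4 < t" by simp_all
      then show ?thesis using less[of "t - 4"] antiperiodic[of "t - 4"] by auto
    qed
  qed
  then show ?thesis unfolding S_def by blast
qed

section \<open>The inner products of the eigenvectors\<close>

lemma eta_eq: "eta = Complex (sqrt 2 / 2) (- (sqrt 2 / 2))"
  unfolding eta_def by (simp add: complex_eq_iff cos_45 sin_45)

lemma eta_mult_cnj: "eta * cnj eta = 1"
  unfolding eta_def by (simp add: cis_cnj cis_mult)

lemma eta_mult_i: "eta * \<i> = cnj eta"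
  by (simp add: eta_eq complex_eq_iff)

lemma Im_eta_power: "Im (eta ^ k) = - sin (real k * pi / 4)"
  unfolding eta_def DeMoivre by simp

lemma alpha_eq: "cnj alpha * (1 + cnj eta) = 1"
proof -
  have "1 + cnj eta \<noteq> 0" by (simp add: eta_eq complex_eq_iff)
  then show ?thesis unfolding alpha_def by (simp add: field_simps)
qed

lemma alpha_betac_eq: "alpha * cnj betac * (1 + cnj eta) = 1 / sqrt 2"
proof -
  have "1 + eta \<noteq> 0" by (simp add: eta_eq complex_eq_iff)
  moreover have "cnj betac * (1 + cnj eta) = (1 + eta) / sqrt 2"
    by (simp add: eta_eq betac_def complex_eq_iff field_simps)
  ultimately show ?thesis unfolding alpha_def by (simp add: field_simps)
qed

lemma cmod_betac_sq: "(cmod betac)\<^sup>2 = 1 / 2"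
  by (simp add: betac_def cmod_def power2_eq_square)

lemma qc_eq: "qc = of_real (sqrt 2 - 1) * eta"
  unfolding qc_def eta_def ..

lemma power_mult_cnj_power_ge:
  fixes z :: complex
  assumes "z * cnj z = 1" "b \<le> a"
  shows "z ^ a * cnj z ^ b = z ^ (a - b)"
proof -
  have "z ^ a * cnj z ^ b = z ^ (a - b) * (z * cnj z) ^ b"
    using assms(2) by (simp add: power_mult_distrib flip: power_add)
  then show ?thesis using assms(1) by simp
qed

lemma power_mult_cnj_power_le:
  fixes z :: complex
  assumes "z * cnj z = 1" "a \<le> b"
  shows "z ^ a * cnj z ^ b = cnj z ^ (b - a)"
  using power_mult_cnj_power_ge[of "cnj z" a b] assms by (simp add: mult.commute)

lemma sum_split_front_middle_back:
  "(\<Sum>k=1..2 * Suc n. f k) =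
     (\<Sum>j<n. f (Suc j)) + (f (Suc n) + f (Suc (Suc n))) + (\<Sum>j<n. f (Suc (Suc (2 * n)) - j))"
proof -
  have "(\<Sum>k=1..2 * Suc n. f k) = (\<Sum>k=1..n + (n + 2). f k)"
    by (rule arg_cong[where f = "\<lambda>x. sum f {1..x}"]) simp
  also have "\<dots> = (\<Sum>k=1..n. f k) + (\<Sum>k=n+1..(n+2)+n. f k)"
    by (subst sum.ub_add_nat) (simp_all add: add.commute)
  also have "(\<Sum>k=n+1..(n+2)+n. f k) = (\<Sum>k=n+1..n+2. f k) + (\<Sum>k=n+3..2*n+2. f k)"
    by (subst sum.ub_add_nat) (simp_all add: numeral_3_eq_3 mult_2)
  also have "(\<Sum>k=1..n. f k) = (\<Sum>j<n. f (Suc j))"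
    using sum.atLeast1_atMost_eq[of f n] by simp
  also have "(\<Sum>k=n+1..n+2. f k) = f (Suc n) + f (Suc (Suc n))"
    by (simp add: numeral_2_eq_2)
  also have "(\<Sum>k=n+3..2*n+2. f k) = (\<Sum>j<n. f (Suc (Suc (2 * n)) - j))"
    by (rule sum.reindex_bij_witness[of _ "\<lambda>k. 2 * n + 2 - k" "\<lambda>j. 2 * n + 2 - j"]) auto
  finally show ?thesis by (simp only: add.assoc)
qed

lemma v0_values:
  "j < n \<Longrightarrow> v0 (Suc n) (Suc j) = Uv (Suc n) j"
  "v0 (Suc n) (Suc n) = Uv (Suc n) n / 2"
  "v0 (Suc n) (Suc (Suc n)) = Uv (Suc n) n / 2"
  "j < n \<Longrightarrow> v0 (Suc n) (Suc (Suc (2 * n)) - j) = 0"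
  unfolding v0_def by auto

lemma v4_values:
  "j < n \<Longrightarrow> v4 (Suc n) (Suc j) = eta ^ j * Uv (Suc n) j"
  "v4 (Suc n) (Suc n) = eta ^ n * alpha * Uv (Suc n) n"
  "v4 (Suc n) (Suc (Suc n)) = eta ^ Suc n * alpha * Uv (Suc n) n"
  "j < n \<Longrightarrow> v4 (Suc n) (Suc (Suc (2 * n)) - j) = eta ^ (2 * n + 1 - j) * qc * Uv (Suc n) j"
  unfolding v4_def by auto

lemma v2_values:
  "j < n \<Longrightarrow> v2 (Suc n) (Suc j) = (- \<i>) ^ j * Uv (Suc n) j"
  "v2 (Suc n) (Suc n) = (- \<i>) ^ n * betac * Uv (Suc n) n"
  "v2 (Suc n) (Suc (Suc n)) = (- \<i>) ^ Suc n * betac * Uv (Suc n) n"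
  "j < n \<Longrightarrow> v2 (Suc n) (Suc (Suc (2 * n)) - j) = (- \<i>) ^ (2 * n + 1 - j) * Uv (Suc n) j"
  unfolding v2_def by auto

lemma cmod_Uv_sq: "(cmod (Uv m j))\<^sup>2 = (chebU j (lam m))\<^sup>2"
  by (simp add: Uv_def)

definition cheb_eta_sum :: "nat \<Rightarrow> complex" where
  "cheb_eta_sum n = (\<Sum>j<n. of_real ((chebU j (lam (Suc n)))\<^sup>2) * eta ^ (n - j))"

lemma cinner_v0_v4:
  "eta ^ n * cinner (2 * Suc n) (v0 (Suc n)) (v4 (Suc n)) =
     cheb_eta_sum n + of_real ((chebU n (lam (Suc n)))\<^sup>2 / 2)"
proof -
  define u where "u j = chebU j (lam (Suc n))" for j
  have front: "v0 (Suc n) (Suc j) * cnj (v4 (Suc n) (Suc j)) = of_real ((u j)\<^sup>2) * cnj eta ^ j"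
    if "j < n" for j
    using that by (simp add: v0_values v4_values Uv_def u_def power2_eq_square)
  have middle: "v0 (Suc n) (Suc n) * cnj (v4 (Suc n) (Suc n))
      + v0 (Suc n) (Suc (Suc n)) * cnj (v4 (Suc n) (Suc (Suc n)))
      = of_real ((u n)\<^sup>2) / 2 * cnj eta ^ n * (cnj alpha * (1 + cnj eta))"
    by (simp add: v0_values v4_values Uv_def u_def power2_eq_square algebra_simps)
  have "cinner (2 * Suc n) (v0 (Suc n)) (v4 (Suc n)) =
      (\<Sum>j<n. of_real ((u j)\<^sup>2) * cnj eta ^ j) + of_real ((u n)\<^sup>2) / 2 * cnj eta ^ n"
    unfolding cinner_def sum_split_front_middle_back middle alpha_eq
    by (simp add: front v0_values(4))
  then have "eta ^ n * cinner (2 * Suc n) (v0 (Suc n)) (v4 (Suc n)) =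
      (\<Sum>j<n. of_real ((u j)\<^sup>2) * (eta ^ n * cnj eta ^ j))
      + of_real ((u n)\<^sup>2) / 2 * (eta ^ n * cnj eta ^ n)"
    by (simp add: algebra_simps sum_distrib_left)
  also have "\<dots> = cheb_eta_sum n + of_real ((u n)\<^sup>2 / 2)"
    unfolding cheb_eta_sum_def u_def
    by (auto simp: power_mult_cnj_power_ge[OF eta_mult_cnj] intro!: sum.cong)
  finally show ?thesis unfolding u_def .
qed

lemma cinner_v4_v2_expand:
  fixes n :: nat
  defines "u j \<equiv> chebU j (lam (Suc n))"
  shows "cinner (2 * Suc n) (v4 (Suc n)) (v2 (Suc n)) =
      (\<Sum>j<n. of_real ((u j)\<^sup>2) * cnj eta ^ j) + of_real ((u n)\<^sup>2) * cnj eta ^ n / sqrt 2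
      + of_real (sqrt 2 - 1) * (\<Sum>j<n. of_real ((u j)\<^sup>2) * (eta * cnj eta ^ (2 * n + 1 - j)))"
proof -
  have front: "v4 (Suc n) (Suc j) * cnj (v2 (Suc n) (Suc j)) = of_real ((u j)\<^sup>2) * cnj eta ^ j"
    if "j < n" for j
  proof -
    have "v4 (Suc n) (Suc j) * cnj (v2 (Suc n) (Suc j)) = of_real ((u j)\<^sup>2) * (eta * \<i>) ^ j"
      using that by (simp add: v4_values v2_values Uv_def u_def power2_eq_square power_mult_distrib)
    then show ?thesis by (simp only: eta_mult_i)
  qed
  have middle: "v4 (Suc n) (Suc n) * cnj (v2 (Suc n) (Suc n))
      + v4 (Suc n) (Suc (Suc n)) * cnj (v2 (Suc n) (Suc (Suc n)))
      = of_real ((u n)\<^sup>2) * cnj eta ^ n * (alpha * cnj betac * (1 + cnj eta))"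
  proof -
    have "v4 (Suc n) (Suc n) * cnj (v2 (Suc n) (Suc n))
        + v4 (Suc n) (Suc (Suc n)) * cnj (v2 (Suc n) (Suc (Suc n)))
        = of_real ((u n)\<^sup>2) * (eta * \<i>) ^ n * (alpha * cnj betac * (1 + eta * \<i>))"
      by (simp add: v4_values v2_values Uv_def u_def power2_eq_square power_mult_distrib algebra_simps)
    then show ?thesis by (simp only: eta_mult_i)
  qed
  have tail: "v4 (Suc n) (Suc (Suc (2 * n)) - j) * cnj (v2 (Suc n) (Suc (Suc (2 * n)) - j))
      = of_real (sqrt 2 - 1) * (of_real ((u j)\<^sup>2) * (eta * cnj eta ^ (2 * n + 1 - j)))"
    if "j < n" for j
  proof -
    have "v4 (Suc n) (Suc (Suc (2 * n)) - j) * cnj (v2 (Suc n) (Suc (Suc (2 * n)) - j))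
        = qc * of_real ((u j)\<^sup>2) * (eta * \<i>) ^ (2 * n + 1 - j)"
      using that by (simp add: v4_values v2_values Uv_def u_def power2_eq_square power_mult_distrib)
    then show ?thesis by (simp only: eta_mult_i qc_eq) (simp add: algebra_simps)
  qed
  show ?thesis
    unfolding cinner_def sum_split_front_middle_back middle alpha_betac_eq
    by (simp add: front tail sum_distrib_left)
qed

lemma cinner_v4_v2:
  "eta ^ n * cinner (2 * Suc n) (v4 (Suc n)) (v2 (Suc n)) =
     cheb_eta_sum n + of_real (sqrt 2 * ((chebU n (lam (Suc n)))\<^sup>2 / 2))
       + of_real (sqrt 2 - 1) * cnj (cheb_eta_sum n)"
proof -
  define u where "u j = chebU j (lam (Suc n))" for j
  have "eta ^ n * cinner (2 * Suc n) (v4 (Suc n)) (v2 (Suc n)) =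
      (\<Sum>j<n. of_real ((u j)\<^sup>2) * (eta ^ n * cnj eta ^ j))
      + of_real ((u n)\<^sup>2) * (eta ^ n * cnj eta ^ n) / sqrt 2
      + of_real (sqrt 2 - 1) * (\<Sum>j<n. of_real ((u j)\<^sup>2) * (eta ^ Suc n * cnj eta ^ (2 * n + 1 - j)))"
    unfolding cinner_v4_v2_expand u_def by (simp add: algebra_simps sum_distrib_left)
  also have "(\<Sum>j<n. of_real ((u j)\<^sup>2) * (eta ^ n * cnj eta ^ j)) = cheb_eta_sum n"
    unfolding cheb_eta_sum_def u_def
    by (auto simp: power_mult_cnj_power_ge[OF eta_mult_cnj] intro!: sum.cong)
  also have "(\<Sum>j<n. of_real ((u j)\<^sup>2) * (eta ^ Suc n * cnj eta ^ (2 * n + 1 - j)))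
      = cnj (cheb_eta_sum n)"
  proof -
    have "eta ^ Suc n * cnj eta ^ (2 * n + 1 - j) = cnj eta ^ (n - j)" if "j < n" for j
      using power_mult_cnj_power_le[OF eta_mult_cnj, of "Suc n" "2 * n + 1 - j"] that by simp
    then show ?thesis
      unfolding cheb_eta_sum_def u_def by (simp del: power_Suc)
  qed
  also have "of_real ((u n)\<^sup>2) * (eta ^ n * cnj eta ^ n) / sqrt 2
      = of_real (sqrt 2 * ((u n)\<^sup>2 / 2))"
  proof -
    have sqrt_2_twice: "sqrt 2 * (sqrt 2 * x) = 2 * x" for x :: real
      by (simp flip: mult.assoc)
    show ?thesis
      by (simp add: power_mult_cnj_power_ge[OF eta_mult_cnj] field_simps sqrt_2_twice
          flip: of_real_mult) simp
  qed
  finally show ?thesis unfolding u_def .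
qed

lemma Im_cheb_eta_sum_neg:
  assumes "1 \<le> n"
  shows "Im (cheb_eta_sum n) < 0"
proof -
  define u where "u j = chebU j (lam (Suc n))" for j
  define g where "g t = (if t \<le> n then (u (n - t))\<^sup>2 else 0)" for t
  have u_ge_1: "1 \<le> u j" for j
    unfolding u_def using chebU_ge_1 lam_ge_1 assms by simp
  then have u_nonneg: "0 \<le> u j" for j
    by (rule order_trans[OF zero_le_one])
  have u_mono: "strict_mono u"
    unfolding u_def using strict_mono_chebU lam_ge_1 assms by simp
  have "Im (cheb_eta_sum n) = - (\<Sum>j<n. (u j)\<^sup>2 * sin (real (n - j) * pi / 4))"
    unfolding cheb_eta_sum_def u_def by (simp add: Im_sum Im_eta_power sum_negf)
  also have "(\<Sum>j<n. (u j)\<^sup>2 * sin (real (n - j) * pi / 4))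
      = (\<Sum>t=1..n. g t * sin (real t * pi / 4))"
    by (rule sum.reindex_bij_witness[of _ "\<lambda>t. n - t" "\<lambda>j. n - j"]) (auto simp: g_def)
  finally have Im_eq: "Im (cheb_eta_sum n) = - (\<Sum>t=1..n. g t * sin (real t * pi / 4))" .
  have "0 < (\<Sum>t=1..n. g t * sin (real t * pi / 4))"
  proof (rule abel_sum_pos)
    show "0 < sin (real 1 * pi / 4)" by (simp add: sin_45)
    show "g (Suc t) \<le> g t" if "1 \<le> t" "t \<le> n" for t
      using that u_nonneg strict_mono_less_eq[OF u_mono, of "n - Suc t" "n - t"]
      by (auto simp: g_def power_mono)
    show "g 2 < g 1"
      using assms u_ge_1[of 0] u_nonneg strict_mono_less[OF u_mono, of "n - 2" "n - 1"]
      by (auto simp: g_def power_strict_mono)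
  qed (use assms sum_sin_quarter_pi_nonneg in \<open>simp_all add: g_def\<close>)
  with Im_eq show ?thesis by linarith
qed

lemma sum_sq_v2_eq:
  "(\<Sum>k=1..2 * Suc n. (cmod (v2 (Suc n) k))\<^sup>2) = 2 * (\<Sum>k=1..2 * Suc n. (cmod (v0 (Suc n) k))\<^sup>2)"
proof -
  define u where "u j = chebU j (lam (Suc n))" for j
  have "(\<Sum>k=1..2 * Suc n. (cmod (v0 (Suc n) k))\<^sup>2) = (\<Sum>j<n. (u j)\<^sup>2) + (u n)\<^sup>2 / 2"
    unfolding sum_split_front_middle_back
    by (simp add: v0_values cmod_Uv_sq norm_divide power_divide u_def)
  moreover have "(\<Sum>k=1..2 * Suc n. (cmod (v2 (Suc n) k))\<^sup>2) = 2 * (\<Sum>j<n. (u j)\<^sup>2) + (u n)\<^sup>2"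
    unfolding sum_split_front_middle_back
    by (simp add: v2_values cmod_Uv_sq norm_mult norm_power power_mult_distrib cmod_betac_sq u_def)
  ultimately show ?thesis by simp
qed

lemma vnorm_v2_eq: "vnorm (2 * Suc n) (v2 (Suc n)) = sqrt 2 * vnorm (2 * Suc n) (v0 (Suc n))"
  unfolding vnorm_def sum_sq_v2_eq by (rule real_sqrt_mult)

lemma vnorm_pos:
  assumes "k \<in> {1..N}" "v k \<noteq> 0"
  shows "0 < vnorm N v"
proof -
  have "0 < (cmod (v k))\<^sup>2" using assms(2) by simp
  also have "\<dots> \<le> (\<Sum>k=1..N. (cmod (v k))\<^sup>2)"
    by (rule member_le_sum) (use assms(1) in auto)
  finally show ?thesis unfolding vnorm_def by simp
qed

lemma cinner_normalize:
  "cinner N (normalize N v) (normalize N w) = cinner N v w / of_real (vnorm N v * vnorm N w)"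
  unfolding cinner_def normalize_def by (simp add: sum_divide_distrib)

lemma cmod_twist_less:
  fixes S :: complex and c :: real
  assumes "Im S \<noteq> 0"
  shows "cmod (S + of_real (sqrt 2 * c) + of_real (sqrt 2 - 1) * cnj S)
    < sqrt 2 * cmod (S + of_real c)"
proof -
  have sqrt_2_sq: "sqrt 2 * sqrt 2 = (2::real)" by simp
  have "(cmod (S + of_real (sqrt 2 * c) + of_real (sqrt 2 - 1) * cnj S))\<^sup>2
      = (sqrt 2 * (Re S + c))\<^sup>2 + ((2 - sqrt 2) * Im S)\<^sup>2"
    by (simp add: cmod_power2 algebra_simps)
  also have "\<dots> = 2 * (Re S + c)\<^sup>2 + (6 - 4 * sqrt 2) * (Im S)\<^sup>2"
    by (simp add: power2_eq_square algebra_simps sqrt_2_sq)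
  also have "\<dots> < 2 * (Re S + c)\<^sup>2 + 2 * (Im S)\<^sup>2"
  proof -
    have "0 < (Im S)\<^sup>2" "1 < sqrt (2::real)" using assms by simp_all
    then show ?thesis by (simp add: mult_strict_right_mono)
  qed
  also have "\<dots> = (sqrt 2 * cmod (S + of_real c))\<^sup>2"
    by (simp add: power_mult_distrib cmod_power2 algebra_simps)
  finally show ?thesis
    by (rule power2_less_imp_less) simp
qed

section \<open>A unitary similarity invariant\<close>

lemma mmul_assoc: "mmul n (mmul n A B) C = mmul n A (mmul n B C)"
  unfolding mmul_def
  by (auto simp: sum_distrib_left sum_distrib_right mult.assoc intro!: ext sum.swap[THEN trans])

lemma madj_mmul: "madj (mmul n A B) = mmul n (madj B) (madj A)"
  unfolding mmul_def madj_def by (auto intro!: ext sum.cong simp: mult.commute)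

lemma madj_madj [simp]: "madj (madj A) = A"
  unfolding madj_def by simp

lemma mmul_identity_left:
  assumes "\<forall>k\<in>{1..n}. \<forall>l\<in>{1..n}. Q k l = (if k = l then 1 else 0)"
  shows "mmul n A (mmul n Q B) = mmul n A B"
proof -
  have "mmul n Q B k j = B k j" if "k \<in> {1..n}" for k j
  proof -
    have "(\<Sum>l=1..n. Q k l * B l j) = (\<Sum>l=1..n. if l = k then B l j else 0)"
      by (rule sum.cong) (use assms that in auto)
    then show ?thesis using that unfolding mmul_def by simp
  qed
  then show ?thesis unfolding mmul_def by (auto intro!: ext sum.cong)
qed

lemma mmul_unitary_cancel:
  assumes "unitary_mat n U"
  shows "mmul n A (mmul n (madj U) (mmul n U B)) = mmul n A B"
  unfolding mmul_assoc[symmetric, of n "madj U" U B]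
  by (rule mmul_identity_left) (use assms in \<open>auto simp: unitary_mat_def\<close>)

definition mtrace :: "nat \<Rightarrow> (nat \<Rightarrow> nat \<Rightarrow> complex) \<Rightarrow> complex" where
  "mtrace n A = (\<Sum>i=1..n. A i i)"

lemma mtrace_mmul_commute: "mtrace n (mmul n A B) = mtrace n (mmul n B A)"
  unfolding mtrace_def mmul_def by (subst sum.swap) (simp add: mult.commute)

lemma mtrace_mmul_identity:
  assumes "\<forall>k\<in>{1..n}. \<forall>l\<in>{1..n}. Q k l = (if k = l then 1 else 0)"
  shows "mtrace n (mmul n A Q) = mtrace n A"
proof -
  have "(\<Sum>k=1..n. A i k * Q k i) = A i i" if "i \<in> {1..n}" for i
  proof -
    have "(\<Sum>k=1..n. A i k * Q k i) = (\<Sum>k=1..n. if k = i then A i k else 0)"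
      by (rule sum.cong) (use assms that in auto)
    then show ?thesis using that by simp
  qed
  then show ?thesis unfolding mtrace_def mmul_def by (auto intro!: sum.cong)
qed

definition sq_mul_adj :: "nat \<Rightarrow> (nat \<Rightarrow> nat \<Rightarrow> complex) \<Rightarrow> nat \<Rightarrow> nat \<Rightarrow> complex" where
  "sq_mul_adj n A = mmul n (mmul n A A) (madj A)"

definition word_trace :: "nat \<Rightarrow> (nat \<Rightarrow> nat \<Rightarrow> complex) \<Rightarrow> complex" where
  "word_trace n A = mtrace n (mmul n (sq_mul_adj n A) (sq_mul_adj n A))"

lemma word_trace_unitary_conj:
  assumes "unitary_mat n U"
  shows "word_trace n (mmul n (mmul n U X) (madj U)) = word_trace n X"
proof -
  note cancel = mmul_unitary_cancel[OF assms]
  let ?Z = "mmul n (mmul n U X) (madj U)"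
  let ?W = "sq_mul_adj n X"
  have "sq_mul_adj n ?Z = mmul n U (mmul n ?W (madj U))"
    unfolding sq_mul_adj_def madj_mmul by (simp add: mmul_assoc cancel)
  then have "mmul n (sq_mul_adj n ?Z) (sq_mul_adj n ?Z) = mmul n U (mmul n (mmul n ?W ?W) (madj U))"
    by (simp add: mmul_assoc cancel)
  then have "word_trace n ?Z = mtrace n (mmul n (mmul n (mmul n ?W ?W) (madj U)) U)"
    unfolding word_trace_def by (simp add: mtrace_mmul_commute)
  also have "\<dots> = mtrace n (mmul n (mmul n ?W ?W) (mmul n (madj U) U))"
    by (simp add: mmul_assoc)
  also have "\<dots> = word_trace n X"
    unfolding word_trace_def
    by (rule mtrace_mmul_identity) (use assms in \<open>auto simp: unitary_mat_def\<close>)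
  finally show ?thesis .
qed

lemma word_trace_cong:
  assumes "\<forall>i\<in>{1..n}. \<forall>j\<in>{1..n}. A i j = B i j"
  shows "word_trace n A = word_trace n B"
proof -
  have mmul_cong: "\<forall>i\<in>{1..n}. \<forall>j\<in>{1..n}. mmul n F G i j = mmul n F' G' i j"
    if "\<forall>i\<in>{1..n}. \<forall>j\<in>{1..n}. F i j = F' i j" "\<forall>i\<in>{1..n}. \<forall>j\<in>{1..n}. G i j = G' i j"
    for F G F' G' :: "nat \<Rightarrow> nat \<Rightarrow> complex"
    using that unfolding mmul_def by auto
  have "\<forall>i\<in>{1..n}. \<forall>j\<in>{1..n}. madj A i j = madj B i j"
    using assms unfolding madj_def by auto
  then have "\<forall>i\<in>{1..n}. \<forall>j\<in>{1..n}. sq_mul_adj n A i j = sq_mul_adj n B i j"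
    unfolding sq_mul_adj_def by (intro mmul_cong assms)
  then have "\<forall>i\<in>{1..n}. \<forall>j\<in>{1..n}.
      mmul n (sq_mul_adj n A) (sq_mul_adj n A) i j = mmul n (sq_mul_adj n B) (sq_mul_adj n B) i j"
    by (intro mmul_cong)
  then show ?thesis
    unfolding word_trace_def mtrace_def by simp
qed

lemma word_trace_unitarily_similar:
  "unitarily_similar n X Y \<Longrightarrow> word_trace n X = word_trace n Y"
  unfolding unitarily_similar_def
  using word_trace_unitary_conj word_trace_cong by metis

lemma word_trace_scale:
  "word_trace n (\<lambda>i j. c * X i j) = (c\<^sup>2 * cnj c)\<^sup>2 * word_trace n X"
proof -
  have "sq_mul_adj n (\<lambda>i j. c * X i j) = (\<lambda>i j. c\<^sup>2 * cnj c * sq_mul_adj n X i j)"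
    unfolding sq_mul_adj_def mmul_def madj_def
    by (auto intro!: ext simp: sum_distrib_left sum_distrib_right power2_eq_square algebra_simps)
  then show ?thesis
    unfolding word_trace_def mmul_def mtrace_def
    by (simp add: sum_distrib_left power2_eq_square algebra_simps)
qed

lemma word_trace_nonzero_imp_not_rotationally_invariant:
  assumes "word_trace n X \<noteq> 0"
  shows "\<not> rotationally_invariant n X"
proof
  assume "rotationally_invariant n X"
  then have "word_trace n X = word_trace n (\<lambda>i j. \<i> * X i j)"
    unfolding rotationally_invariant_def using word_trace_unitarily_similar cis_pi_half by metis
  also have "\<dots> = - word_trace n X"
    by (simp add: word_trace_scale power2_eq_square)
  finally show False using assms by simp
qed

lemma sum_eq_single:
  assumes "finite A" "\<And>k. k \<noteq> a \<Longrightarrow> f k = 0" "a \<notin> A \<Longrightarrow> f a = 0"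
  shows "sum f A = f a"
proof -
  have "sum f A = (\<Sum>k\<in>A. if k = a then f a else 0)"
    by (rule sum.cong) (use assms(2) in auto)
  then show ?thesis using assms by simp
qed

lemma word_trace_band:
  fixes A :: "nat \<Rightarrow> nat \<Rightarrow> complex"
  assumes band: "\<And>i j. A i j \<noteq> 0 \<Longrightarrow> j = Suc i \<or> j = Suc (Suc i)"
    and support: "\<And>i j. A i j \<noteq> 0 \<Longrightarrow> 1 \<le> i \<and> j \<le> n"
  shows "word_trace n A =
    (\<Sum>i=1..n. (A i (Suc i) * A (Suc i) (Suc (Suc i)) * cnj (A i (Suc (Suc i))))\<^sup>2)"
proof -
  let ?A2 = "mmul n A A" and ?W = "sq_mul_adj n A"
  have A2_below: "?A2 i k = 0" if "k < Suc (Suc i)" for i k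
  proof -
    have "A i l * A l k = 0" for l
      using band[of i l] band[of l k] that by fastforce
    then show ?thesis unfolding mmul_def by (intro sum.neutral ballI)
  qed
  have A2_entry: "?A2 i (Suc (Suc i)) = A i (Suc i) * A (Suc i) (Suc (Suc i))" for i
    unfolding mmul_def
  proof (rule sum_eq_single)
    show "A i l * A l (Suc (Suc i)) = 0" if "l \<noteq> Suc i" for l
      using band[of i l] band[of l "Suc (Suc i)"] that by fastforce
    show "A i (Suc i) * A (Suc i) (Suc (Suc i)) = 0" if "Suc i \<notin> {1..n}"
      using support[of i "Suc i"] that by fastforce
  qed simp
  have W_below: "?W i j = 0" if "j < i" for i j
  proof -
    have "?A2 i k * cnj (A j k) = 0" for k
      using band[of j k] A2_below[of k i] that by fastforce
    then show ?thesis
      unfolding sq_mul_adj_def mmul_def[of n ?A2] madj_def by (intro sum.neutral ballI)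
  qed
  have W_diag: "?W i i = ?A2 i (Suc (Suc i)) * cnj (A i (Suc (Suc i)))" for i
    unfolding sq_mul_adj_def mmul_def[of n ?A2] madj_def
  proof (rule sum_eq_single)
    show "?A2 i k * cnj (A i k) = 0" if "k \<noteq> Suc (Suc i)" for k
      using band[of i k] A2_below[of k i] that by fastforce
    show "?A2 i (Suc (Suc i)) * cnj (A i (Suc (Suc i))) = 0" if "Suc (Suc i) \<notin> {1..n}"
      using support[of i "Suc (Suc i)"] that by fastforce
  qed simp
  have "word_trace n A = (\<Sum>i=1..n. \<Sum>k=1..n. ?W i k * ?W k i)"
    unfolding word_trace_def mtrace_def mmul_def ..
  also have "\<dots> = (\<Sum>i=1..n. ?W i i * ?W i i)"
    by (rule sum.cong[OF refl], rule sum_eq_single) (use W_below in \<open>auto simp: neq_iff\<close>)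
  finally show ?thesis by (simp add: W_diag A2_entry power2_eq_square)
qed

lemma Cmat_band: "Cmat m i j \<noteq> 0 \<Longrightarrow> j = Suc i \<or> j = Suc (Suc i)"
  unfolding Cmat_def Jblock_def Emat_def by (auto split: if_splits)

lemma Cmat_support: "2 \<le> m \<Longrightarrow> Cmat m i j \<noteq> 0 \<Longrightarrow> 1 \<le> i \<and> j \<le> 2 * m"
  unfolding Cmat_def Jblock_def Emat_def by (auto split: if_splits)

lemma word_trace_Cmat:
  assumes "2 \<le> m"
  shows "word_trace (2 * m) (Cmat m) = 2"
proof -
  have "(Cmat m i (Suc i) * Cmat m (Suc i) (Suc (Suc i)) * cnj (Cmat m i (Suc (Suc i))))\<^sup>2
      = (if i = m - 1 then 1 else 0) + (if i = m then 1 else 0)" for i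
    using assms by (auto simp: Cmat_def Jblock_def Emat_def)
  moreover have "word_trace (2 * m) (Cmat m) =
    (\<Sum>i=1..2 * m. (Cmat m i (Suc i) * Cmat m (Suc i) (Suc (Suc i)) * cnj (Cmat m i (Suc (Suc i))))\<^sup>2)"
    by (rule word_trace_band[OF Cmat_band Cmat_support[OF assms]])
  ultimately show ?thesis
    using assms by (auto simp: sum.distrib)
qed

section \<open>Comparing the normalized inner products\<close>

lemma cmod_cinner_v4_v2_less:
  assumes "1 \<le> n"
  shows "cmod (cinner (2 * Suc n) (v4 (Suc n)) (v2 (Suc n)))
    < sqrt 2 * cmod (cinner (2 * Suc n) (v0 (Suc n)) (v4 (Suc n)))"
proof -
  have unimodular: "cmod (eta ^ n * z) = cmod z" for z
    by (simp add: norm_mult norm_power eta_def)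
  let ?c = "(chebU n (lam (Suc n)))\<^sup>2 / 2"
  have "cmod (cinner (2 * Suc n) (v4 (Suc n)) (v2 (Suc n))) =
      cmod (cheb_eta_sum n + of_real (sqrt 2 * ?c) + of_real (sqrt 2 - 1) * cnj (cheb_eta_sum n))"
    by (metis cinner_v4_v2 unimodular)
  also have "\<dots> < sqrt 2 * cmod (cheb_eta_sum n + of_real ?c)"
    by (rule cmod_twist_less) (use Im_cheb_eta_sum_neg[OF assms] in simp)
  also have "\<dots> = sqrt 2 * cmod (cinner (2 * Suc n) (v0 (Suc n)) (v4 (Suc n)))"
    by (metis cinner_v0_v4 unimodular)
  finally show ?thesis .
qed

theorem mainTheorem19:
  fixes m :: nat
  assumes "m \<ge> 2"
  shows "cmod (cinner (2 * m) (normalize (2 * m) (v0 m)) (normalize (2 * m) (v4 m)))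
           > cmod (cinner (2 * m) (normalize (2 * m) (v4 m)) (normalize (2 * m) (v2 m)))
         \<and> \<not> rotationally_invariant (2 * m) (Cmat m)"
proof
  obtain n where m: "m = Suc n" and n: "1 \<le> n"
    using assms by (cases m) auto
  define a b where "a = vnorm (2 * m) (v0 m)" and "b = vnorm (2 * m) (v4 m)"
  have "0 < a" "0 < b"
    unfolding a_def b_def m using n by (auto intro!: vnorm_pos[of 1] simp: v0_def v4_def Uv_def)
  then have "cmod (cinner (2 * m) (normalize (2 * m) (v4 m)) (normalize (2 * m) (v2 m)))
      = cmod (cinner (2 * m) (v4 m) (v2 m)) / (sqrt 2 * (a * b))"
    unfolding cinner_normalize m vnorm_v2_eq a_def b_def by (simp add: norm_divide norm_mult)
  also have "\<dots> < sqrt 2 * cmod (cinner (2 * m) (v0 m) (v4 m)) / (sqrt 2 * (a * b))"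
    unfolding m using cmod_cinner_v4_v2_less[OF n] \<open>0 < a\<close> \<open>0 < b\<close>
    by (intro divide_strict_right_mono) simp_all
  also have "\<dots> = cmod (cinner (2 * m) (normalize (2 * m) (v0 m)) (normalize (2 * m) (v4 m)))"
    using \<open>0 < a\<close> \<open>0 < b\<close> unfolding cinner_normalize a_def b_def
    by (simp add: norm_divide norm_mult)
  finally show "cmod (cinner (2 * m) (normalize (2 * m) (v0 m)) (normalize (2 * m) (v4 m)))
           > cmod (cinner (2 * m) (normalize (2 * m) (v4 m)) (normalize (2 * m) (v2 m)))" .
  show "\<not> rotationally_invariant (2 * m) (Cmat m)"
    by (rule word_trace_nonzero_imp_not_rotationally_invariant)
      (simp add: word_trace_Cmat[OF assms])
qed

end
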